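(* Let $\tau>0$, let $K\ge 1$ be an integer, and let $v_{max}>0$ and $u_b<0$ be constants. Consider a vehicle with speed bound $\overline v\in(0,v_{max}]$ and acceleration bounds $\underline u\le u_b<0<\overline u$, whose state evolves under the discrete dynamics described in the context. Assume $$K\tau\ \ge\ \frac{v_{max}}{|u_b|}+\tau .$$ Let $(s^0,v^0)$ with $v^0\in[0,\overline v]$ be an initial state and let $(u^k)_{0\le k<K}$ be an admissible control sequence, producing the admissible trajectory $(s^k,v^k)_{0\le k\le K}$. Then there exists an admissible control sequence $(\tilde u^k)_{0\le k\le K}$ with $\tilde u^0=u^0$ such that the corresponding trajectory $(\tilde s^k,\tilde v^k)_{0\le k\le K+1}$ starting from the same initial state $(\tilde s^0,\tilde v^0)=(s^0,v^0)$ satisfies $$\tilde v^K=\tilde v^{K+1}=0\qquad\text{and}\qquad \tilde s^{K+1}\le s^K .$$ (Equivalently, under the associated piecewise-constant acceleration in continuous time, the vehicle is at rest on the whole interval $[K\tau,(K+1)\tau]$ and its position at time $(K+1)\tau$ does not exceed the position of the original trajectory at time $K\tau$.)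
   Context: Time is discretized with step $\tau>0$; a vehicle applies a constant longitudinal acceleration $u^k$ on $[k\tau,(k+1)\tau)$. Its curvilinear position $s^k$ and longitudinal speed $v^k$ at time $k\tau$ obey $$v^{k+1}=v^k+u^k\tau,\qquad s^{k+1}=s^k+\tfrac12\,(v^k+v^{k+1})\,\tau ,$$ which are the exact double-integrator dynamics under piecewise-constant acceleration. A control sequence (and the resulting trajectory) is called admissible if for every index $k$ where it is defined, $u^k\in[\underline u,\overline u]$, and every resulting speed satisfies $v^k\in[0,\overline v]$ (speeds must be nonnegative and bounded by $\overline v$). *)

theory Defs
  imports Complex_Main
begin

fun vel :: "real \<Rightarrow> real \<Rightarrow> (nat \<Rightarrow> real) \<Rightarrow> nat \<Rightarrow> real" where
  "vel tau v0 u 0 = v0"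
| "vel tau v0 u (Suc k) = vel tau v0 u k + u k * tau"

fun pos :: "real \<Rightarrow> real \<Rightarrow> real \<Rightarrow> (nat \<Rightarrow> real) \<Rightarrow> nat \<Rightarrow> real" where
  "pos tau s0 v0 u 0 = s0"
| "pos tau s0 v0 u (Suc k) =
     pos tau s0 v0 u k + (vel tau v0 u k + vel tau v0 u (Suc k)) / 2 * tau"

definition admissible ::
  "real \<Rightarrow> real \<Rightarrow> real \<Rightarrow> real \<Rightarrow> real \<Rightarrow> (nat \<Rightarrow> real) \<Rightarrow> nat \<Rightarrow> bool" where
  "admissible tau ulo uhi vbar v0 u N \<longleftrightarrow>
     (\<forall>k<N. ulo \<le> u k \<and> u k \<le> uhi) \<and>
     (\<forall>k\<le>N. 0 \<le> vel tau v0 u k \<and> vel tau v0 u k \<le> vbar)"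

end

theory Submission
  imports Defs
begin

text \<open>Keep the first control u^0, then brake as hard as allowed (at \<open>ulo\<close>) until rest. Since
  \<open>ulo \<le> ub\<close>, the speed \<open>v\<^sup>1 \<le> vmax\<close> is exhausted within \<open>vmax / \<bar>ub\<bar> \<le> (K - 1) \<tau>\<close>, so the
  vehicle is at rest from step K on. No admissible trajectory can decelerate faster, so the
  braking speeds stay below the original ones up to step K; as positions are trapezoidal sums
  of speeds, the braking position at K, which equals that at K + 1, is at most s^K.\<close>

lemma vel_of_increments:
  assumes "tau \<noteq> 0"
  shows "vel tau (w 0) (\<lambda>k. (w (Suc k) - w k) / tau) k = w k"
  using assms by (induction k) simp_all

lemma vel_lower_bound:
  assumes "0 \<le> tau" and "j \<le> k" and "\<And>i. j \<le> i \<Longrightarrow> i < k \<Longrightarrow> a \<le> u i"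
  shows "vel tau v0 u j + real (k - j) * a * tau \<le> vel tau v0 u k"
  using assms(2,3)
proof (induction k rule: dec_induct)
  case base
  then show ?case by simp
next
  case (step k)
  have "a * tau \<le> u k * tau"
    using step.prems step.hyps assms(1) by (intro mult_right_mono) auto
  with step show ?case by (simp add: Suc_diff_le algebra_simps)
qed

lemma pos_mono_vel:
  assumes "0 \<le> tau" and "\<And>k. k \<le> n \<Longrightarrow> vel tau v0' u' k \<le> vel tau v0 u k"
  shows "pos tau s0 v0' u' n \<le> pos tau s0 v0 u n"
  using assms(2)
proof (induction n)
  case 0
  then show ?case by simp
next
  case (Suc n)
  have "(vel tau v0' u' n + vel tau v0' u' (Suc n)) / 2 * tau
          \<le> (vel tau v0 u n + vel tau v0 u (Suc n)) / 2 * tau"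
    using Suc.prems[of n] Suc.prems[of "Suc n"] assms(1)
    by (intro mult_right_mono divide_right_mono) auto
  with Suc show ?case by simp
qed

definition stop_profile :: "real \<Rightarrow> real \<Rightarrow> real \<Rightarrow> real \<Rightarrow> nat \<Rightarrow> real" where
  "stop_profile tau a v0 v1 k = (case k of 0 \<Rightarrow> v0 | Suc j \<Rightarrow> max 0 (v1 + real j * a * tau))"

lemma stop_profile_bounds:
  assumes "a * tau \<le> 0" and "0 \<le> v0" "v0 \<le> vbar" and "0 \<le> v1" "v1 \<le> vbar"
  shows "0 \<le> stop_profile tau a v0 v1 k \<and> stop_profile tau a v0 v1 k \<le> vbar"
proof (cases k)
  case (Suc j)
  have "real j * (a * tau) \<le> 0"
    using assms(1) by (simp add: mult_nonneg_nonpos)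
  with Suc assms show ?thesis by (simp add: stop_profile_def mult.assoc)
qed (use assms in \<open>simp add: stop_profile_def\<close>)

lemma stop_profile_increment_bounds:
  assumes "0 < tau" and "a \<le> 0" and "1 \<le> k"
  shows "a \<le> (stop_profile tau a v0 v1 (Suc k) - stop_profile tau a v0 v1 k) / tau
     \<and> (stop_profile tau a v0 v1 (Suc k) - stop_profile tau a v0 v1 k) / tau \<le> 0"
proof -
  obtain j where k: "k = Suc j" using assms(3) by (cases k) auto
  have "a * tau \<le> 0" using assms(1,2) by (simp add: mult_nonpos_nonneg)
  moreover have "v1 + real (Suc j) * a * tau = (v1 + real j * a * tau) + a * tau"
    by (simp add: algebra_simps)
  ultimately have "a * tau \<le> stop_profile tau a v0 v1 (Suc k) - stop_profile tau a v0 v1 k"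
    "stop_profile tau a v0 v1 (Suc k) - stop_profile tau a v0 v1 k \<le> 0"
    using k by (auto simp: stop_profile_def)
  with assms(1) show ?thesis by (simp add: pos_le_divide_eq divide_nonpos_pos)
qed

lemma stop_profile_at_rest:
  assumes "a * tau \<le> 0" and "1 \<le> k" and "k \<le> m" and "v1 + (real k - 1) * a * tau \<le> 0"
  shows "stop_profile tau a v0 v1 m = 0"
proof -
  obtain j where m: "m = Suc j" using assms(2,3) by (cases m) auto
  have "(real j - (real k - 1)) * (a * tau) \<le> 0"
    using assms(1,3) m by (simp add: mult_nonneg_nonpos)
  with assms(4) have "v1 + real j * a * tau \<le> 0" by (simp add: algebra_simps)
  with m show ?thesis by (simp add: stop_profile_def)
qed

lemma stop_profile_le_vel:
  assumes "0 \<le> tau" and "k \<le> n"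
    and "\<And>i. i < n \<Longrightarrow> a \<le> u i" and "\<And>i. i \<le> n \<Longrightarrow> 0 \<le> vel tau v0 u i"
  shows "stop_profile tau a v0 (vel tau v0 u 1) k \<le> vel tau v0 u k"
proof (cases k)
  case (Suc j)
  have "vel tau v0 u 1 + real (k - 1) * a * tau \<le> vel tau v0 u k"
    using Suc assms by (intro vel_lower_bound) auto
  moreover have "0 \<le> vel tau v0 u k"
    using assms(2,4) by simp
  ultimately show ?thesis
    using Suc by (simp add: stop_profile_def del: vel.simps)
qed (simp add: stop_profile_def)

lemma braking_time_suffices:
  assumes "0 < tau" and "1 \<le> K" and "ulo \<le> ub" and "ub < 0" and "v1 \<le> vmax"
    and "vmax / \<bar>ub\<bar> + tau \<le> real K * tau"
  shows "v1 + (real K - 1) * ulo * tau \<le> 0"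
proof -
  have "vmax \<le> (real K - 1) * tau * (- ub)"
    using assms(4,6) by (simp add: field_simps)
  also have "\<dots> \<le> (real K - 1) * tau * (- ulo)"
    using assms(1-3) by (intro mult_left_mono) auto
  finally show ?thesis
    using assms(5) by (simp add: algebra_simps)
qed

theorem lemma1:
  fixes tau vmax ub vbar ulo uhi s0 v0 :: real
    and K :: nat and u :: "nat \<Rightarrow> real"
  assumes "tau > 0" and "K \<ge> 1" and "vmax > 0" and "ub < 0"
    and "0 < vbar" and "vbar \<le> vmax"
    and "ulo \<le> ub" and "0 < uhi"
    and "real K * tau \<ge> vmax / \<bar>ub\<bar> + tau"
    and "0 \<le> v0" and "v0 \<le> vbar"
    and "admissible tau ulo uhi vbar v0 u K"
  shows "\<exists>u'. u' 0 = u 0 \<and> admissible tau ulo uhi vbar v0 u' (K + 1)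
           \<and> vel tau v0 u' K = 0 \<and> vel tau v0 u' (K + 1) = 0
           \<and> pos tau s0 v0 u' (K + 1) \<le> pos tau s0 v0 u K"
proof -
  note adm = assms(12)[unfolded admissible_def]
  define v1 where "v1 = vel tau v0 u 1"
  define w where "w = stop_profile tau ulo v0 v1"
  define u' where "u' k = (w (Suc k) - w k) / tau" for k
  have brake: "ulo * tau \<le> 0"
    using assms(1,4,7) by (simp add: mult_nonpos_nonneg)
  have v1: "0 \<le> v1" "v1 \<le> vbar" and u0: "ulo \<le> u 0" "u 0 \<le> uhi"
    using adm assms(2) by (auto simp: v1_def)
  have vel_u': "vel tau v0 u' k = w k" for k
    using vel_of_increments[of tau w k] assms(1)
    unfolding u'_def[abs_def] by (simp add: w_def stop_profile_def del: vel.simps)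
  have u'0: "u' 0 = u 0"
    using assms(1) v1 by (simp add: u'_def w_def v1_def stop_profile_def field_simps)
  have "ulo \<le> u' k \<and> u' k \<le> uhi" for k
  proof (cases "k = 0")
    case False
    moreover have "ulo \<le> 0" using assms(4,7) by simp
    ultimately show ?thesis
      using stop_profile_increment_bounds[OF assms(1), of ulo k v0 v1] assms(8)
      unfolding u'_def w_def by auto
  qed (use u'0 u0 in simp)
  moreover have "0 \<le> w k \<and> w k \<le> vbar" for k
    unfolding w_def using stop_profile_bounds[OF brake assms(10,11) v1] .
  ultimately have adm': "admissible tau ulo uhi vbar v0 u' (K + 1)"
    unfolding admissible_def vel_u' by auto
  have "v1 + (real K - 1) * ulo * tau \<le> 0"
    using braking_time_suffices[OF assms(1,2,7,4) _ assms(9)] v1 assms(6) by simp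
  then have rest: "w K = 0" "w (K + 1) = 0"
    unfolding w_def using stop_profile_at_rest[OF brake assms(2)] by auto
  have "w k \<le> vel tau v0 u k" if "k \<le> K" for k
    using adm assms(1) that unfolding w_def v1_def by (intro stop_profile_le_vel) auto
  then have "pos tau s0 v0 u' K \<le> pos tau s0 v0 u K"
    using assms(1) by (intro pos_mono_vel) (auto simp: vel_u')
  then have "pos tau s0 v0 u' (K + 1) \<le> pos tau s0 v0 u K"
    using rest by (simp only: Suc_eq_plus1[symmetric] pos.simps vel_u') simp
  with u'0 adm' rest show ?thesis
    by (intro exI[of _ u']) (simp only: vel_u' simp_thms)
qed

end
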